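(* Let $\mathbf{f}$ be the Fibonacci word and $\phi=\frac{1+\sqrt5}{2}$. There is a constant $c\le \frac{4}{\sqrt5}\phi\approx 2.89$ such that for every positive integer $k$ and every index $i\ge 0$ of $\mathbf{f}$, there is a $k$-antipower with block length at most $ck$ starting at position $i$ of $\mathbf{f}$.
   Context: The Fibonacci word is $\mathbf{f}=\sigma^{\omega}(0)=0100101001001\cdots$, the fixed point of the morphism $\sigma(0)=01$, $\sigma(1)=0$ (i.e. the infinite word having every $\sigma^n(0)$ as a prefix). Words are indexed from $0$. A $k$-antipower is a word that is the concatenation of $k$ pairwise distinct words (blocks) of equal length; that common length is the block length. *)

theory Defs
  imports Complex_Main
begin

definition fib_morph :: "nat list \<Rightarrow> nat list" where
  "fib_morph w = concat (map (\<lambda>a. if a = 0 then [0, 1] else [0]) w)"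

text \<open>The infinite Fibonacci word f = sigma^omega(0), indexed from 0: the i-th letter is the
  i-th letter of any sigma^n(0) long enough to contain position i.\<close>
definition fib_word :: "nat \<Rightarrow> nat" where
  "fib_word i = (let n = (LEAST n. i < length ((fib_morph ^^ n) [0])) in ((fib_morph ^^ n) [0]) ! i)"

definition factor :: "(nat \<Rightarrow> 'a) \<Rightarrow> nat \<Rightarrow> nat \<Rightarrow> 'a list" where
  "factor x i m = map x [i..<i + m]"

definition is_antipower_at :: "(nat \<Rightarrow> 'a) \<Rightarrow> nat \<Rightarrow> nat \<Rightarrow> nat \<Rightarrow> bool" where
  "is_antipower_at x i k m \<longleftrightarrow>
     (\<forall>a<k. \<forall>b<k. a \<noteq> b \<longrightarrow> factor x (i + a * m) m \<noteq> factor x (i + b * m) m)"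

end

theory Submission
  imports Defs "HOL-Number_Theory.Fib"
begin

text \<open>Let \<open>\<alpha> = (\<surd>5 - 1) / 2 = 1 / \<phi>\<close>. The Fibonacci word is the Sturmian word of slope \<alpha>:
  its letter at position \<open>i\<close> is 1 exactly when \<open>\<lfloor>(i + 2) \<alpha>\<rfloor> = \<lfloor>(i + 1) \<alpha>\<rfloor>\<close>, because \<sigma> maps
  every prefix of this coding onto a longer prefix. So if the factors of length \<open>m\<close> at \<open>p\<close> and
  \<open>p + d\<close> agree, then for all \<open>t \<le> m\<close> the points \<open>X + t \<alpha>\<close> and \<open>X + \<epsilon> + t \<alpha>\<close> (with \<open>\<epsilon>\<close> the
  difference of \<open>d \<alpha>\<close> and an integer) cross the same number of integers. The points \<open>-t \<alpha>\<close>
  mod 1 with \<open>t < F\<^bsub>n+2\<^esub>\<close> leave no gap longer than \<open>\<alpha>\<^sup>n\<close> on the circle, so this is impossible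
  once \<open>m \<ge> F\<^bsub>n+2\<^esub>\<close> and \<open>\<alpha>\<^sup>n \<le> \<bar>\<epsilon>\<bar> \<le> 1 - \<alpha>\<^sup>n\<close>. With block length \<open>m = 2 F\<^bsub>n+1\<^esub>\<close> the shift by
  \<open>j\<close> blocks gives \<open>\<bar>\<epsilon>\<bar> = 2 j \<alpha>\<^bsup>n+1\<^esup>\<close>, which lies in this window for all \<open>0 < j < k\<close> as soon as
  \<open>2 (k - 1) \<alpha>\<^bsup>n+1\<^esup> + \<alpha>\<^sup>n \<le> 1\<close>; for the least such \<open>n\<close>, the identity
  \<open>F\<^bsub>n+1\<^esub> \<alpha>\<^sup>n (2 - \<alpha>) = 1 - (-\<alpha>\<^sup>2)\<^bsup>n+1\<^esup>\<close> bounds \<open>m\<close> by \<open>4 k / (2 - \<alpha>) = 4 \<phi> k / \<surd>5\<close>.\<close>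

section \<open>The inverse golden ratio\<close>

definition \<alpha> :: real where "\<alpha> = (sqrt 5 - 1) / 2"

lemma alpha_sq: "\<alpha>\<^sup>2 = 1 - \<alpha>"
  unfolding \<alpha>_def power2_eq_square by (simp add: field_simps)

lemma alpha_mult_one_plus: "\<alpha> * (1 + \<alpha>) = 1"
  using alpha_sq by (simp add: algebra_simps power2_eq_square)

lemma alpha_pow_Suc_Suc: "\<alpha> ^ Suc (Suc n) = \<alpha> ^ n - \<alpha> ^ Suc n"
proof -
  have "\<alpha> ^ Suc (Suc n) = \<alpha> ^ n * \<alpha>\<^sup>2"
    by (simp add: power2_eq_square)
  then show ?thesis
    by (simp add: alpha_sq algebra_simps)
qed

lemma alpha_gt_half: "1 / 2 < \<alpha>"
proof -
  have "2 < sqrt 5" by (rule real_less_rsqrt) simp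
  then show ?thesis unfolding \<alpha>_def by simp
qed

lemma alpha_less_1: "\<alpha> < 1"
proof -
  have "sqrt 5 < 3" by (rule real_sqrt_less_iff[THEN iffD2, of 5 9, simplified])
  then show ?thesis unfolding \<alpha>_def by simp
qed

lemma alpha_pos: "0 < \<alpha>"
  using alpha_gt_half by simp

lemma alpha_irrational: "\<alpha> \<notin> \<rat>"
proof
  assume "\<alpha> \<in> \<rat>"
  then obtain m n :: nat where "n \<noteq> 0" "\<bar>\<alpha>\<bar> = real m / real n" and coprime: "coprime m n"
    by (rule Rats_abs_nat_div_natE)
  then have "real m = \<alpha> * real n"
    using alpha_pos by (simp add: field_simps)
  then have "real (m * m + m * n) = (\<alpha>\<^sup>2 + \<alpha>) * real (n * n)"
    by (simp add: algebra_simps power2_eq_square)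
  then have "real (m * m + m * n) = real (n * n)"
    unfolding alpha_sq by simp
  then have eq: "m * m + m * n = n * n"
    by (simp only: of_nat_eq_iff)
  have "odd m \<or> odd n"
    using coprime by fastforce
  then show False
    using eq by (metis even_add even_mult_iff)
qed

lemma mult_alpha_notin_Ints: "0 < t \<Longrightarrow> real t * \<alpha> \<notin> \<int>"
  by (metis Ints_subset_Rats Rats_divide Rats_of_nat alpha_irrational
      nonzero_mult_div_cancel_left of_nat_0_less_iff order_less_irrefl subsetD)

lemma fib_mult_alpha_diff: "real (fib (Suc n)) * \<alpha> - real (fib n) = - ((- \<alpha>) ^ Suc n)"
proof (induction n rule: fib.induct)
  case (3 n)
  have "real (fib (Suc (Suc (Suc n)))) * \<alpha> - real (fib (Suc (Suc n)))
      = (real (fib (Suc (Suc n))) * \<alpha> - real (fib (Suc n))) + (real (fib (Suc n)) * \<alpha> - real (fib n))"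
    by (simp add: algebra_simps)
  also have "\<dots> = - ((- \<alpha>) ^ Suc n) * (1 - \<alpha>)"
    using 3 by (simp add: algebra_simps)
  also have "\<dots> = - ((- \<alpha>) ^ Suc (Suc (Suc n)))"
    by (simp add: alpha_sq[symmetric] power2_eq_square)
  finally show ?case .
qed (simp_all add: alpha_sq[unfolded power2_eq_square])

lemma fib_Suc_mult_alpha_pow: "real (fib (Suc n)) * \<alpha> ^ n * (2 - \<alpha>) = 1 - (- \<alpha>\<^sup>2) ^ Suc n"
proof (induction n rule: fib.induct)
  case (3 n)
  define r where "r = - \<alpha>\<^sup>2"
  have "real (fib (Suc (Suc (Suc n)))) * \<alpha> ^ Suc (Suc n) * (2 - \<alpha>)
      = \<alpha> * (real (fib (Suc (Suc n))) * \<alpha> ^ Suc n * (2 - \<alpha>))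
        + \<alpha>\<^sup>2 * (real (fib (Suc n)) * \<alpha> ^ n * (2 - \<alpha>))"
    by (simp add: algebra_simps power2_eq_square)
  also have "\<dots> = (\<alpha> + \<alpha>\<^sup>2) - r ^ Suc n * (\<alpha> * r + \<alpha>\<^sup>2)"
    unfolding 3 r_def by (simp add: algebra_simps)
  also have "\<alpha> * r + \<alpha>\<^sup>2 = \<alpha>\<^sup>2 * (1 - \<alpha>)"
    by (simp add: r_def algebra_simps power2_eq_square)
  also have "\<dots> = r\<^sup>2"
    by (simp add: r_def flip: alpha_sq)
  also have "(\<alpha> + \<alpha>\<^sup>2) - r ^ Suc n * r\<^sup>2 = 1 - (- \<alpha>\<^sup>2) ^ Suc (Suc (Suc n))"
    by (simp add: alpha_sq r_def power_add[symmetric])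
  finally show ?case .
next
  case 2
  have "(- \<alpha>\<^sup>2) ^ Suc (Suc 0) = (\<alpha>\<^sup>2)\<^sup>2"
    by (simp add: numeral_2_eq_2)
  also have "\<dots> = (1 - \<alpha>)\<^sup>2"
    by (simp only: alpha_sq)
  finally show ?case
    by (simp add: power2_eq_square algebra_simps)
qed (simp add: alpha_sq)

section \<open>The Fibonacci word as a Sturmian word\<close>

text \<open>The prefix of length \<open>n\<close> of the Fibonacci word contains \<open>\<lfloor>(n + 1) \<alpha>\<rfloor>\<close> zeros.\<close>

definition zero_count :: "nat \<Rightarrow> int" where
  "zero_count n = \<lfloor>real (Suc n) * \<alpha>\<rfloor>"

definition sturm :: "nat \<Rightarrow> nat" where
  "sturm n = (if zero_count (Suc n) = zero_count n then 1 else 0)"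

lemma zero_count_0: "zero_count 0 = 0"
  using alpha_pos alpha_less_1 unfolding zero_count_def by (simp add: floor_eq_iff)

lemma zero_count_pos: "0 < n \<Longrightarrow> 0 < zero_count n"
proof -
  assume "0 < n"
  then have "2 * \<alpha> \<le> real (Suc n) * \<alpha>"
    using alpha_pos by (intro mult_right_mono) auto
  then have "1 \<le> real (Suc n) * \<alpha>"
    using alpha_gt_half by linarith
  then show ?thesis
    unfolding zero_count_def by (simp add: le_floor_iff)
qed

lemma zero_count_Suc_cases: "zero_count (Suc n) = zero_count n \<or> zero_count (Suc n) = zero_count n + 1"
proof -
  have "\<lfloor>real (Suc n) * \<alpha> + \<alpha>\<rfloor> \<in> {\<lfloor>real (Suc n) * \<alpha>\<rfloor>, \<lfloor>real (Suc n) * \<alpha>\<rfloor> + 1}"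
    using alpha_pos alpha_less_1 by (simp add: floor_add floor_eq_iff)
  then show ?thesis
    unfolding zero_count_def by (simp add: algebra_simps)
qed

lemma zero_count_Suc: "zero_count (Suc n) = zero_count n + (1 - int (sturm n))"
  using zero_count_Suc_cases[of n] unfolding sturm_def by auto

lemma sturm_0: "sturm 0 = 0"
proof -
  have "zero_count 1 = 1"
    using alpha_gt_half alpha_less_1 unfolding zero_count_def by (simp add: floor_eq_iff)
  then show ?thesis
    unfolding sturm_def by (simp add: zero_count_0)
qed

lemma mult_alpha_add_floor:
  "real (n + nat \<lfloor>real n * \<alpha>\<rfloor>) * \<alpha> = real n - frac (real n * \<alpha>) * \<alpha>"
proof -
  have "real (nat \<lfloor>real n * \<alpha>\<rfloor>) = real n * \<alpha> - frac (real n * \<alpha>)"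
    using alpha_pos by (simp add: frac_def)
  then have "real (n + nat \<lfloor>real n * \<alpha>\<rfloor>) * \<alpha> = (real n + real n * \<alpha> - frac (real n * \<alpha>)) * \<alpha>"
    by simp
  also have "\<dots> = real n * (\<alpha> * (1 + \<alpha>)) - frac (real n * \<alpha>) * \<alpha>"
    by (simp add: algebra_simps)
  finally show ?thesis
    unfolding alpha_mult_one_plus by simp
qed

lemma frac_mult_alpha_pos: "0 < frac (real (Suc n) * \<alpha>)"
  using mult_alpha_notin_Ints[of "Suc n"] by simp

lemma sturm_eq_0_imp_frac_gt:
  assumes "sturm n = 0"
  shows "1 - \<alpha> < frac (real (Suc n) * \<alpha>)"
proof -
  define x where "x = real (Suc n) * \<alpha>"
  have "zero_count (Suc n) = zero_count n + 1"
    using assms zero_count_Suc[of n] by simp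
  then have "\<lfloor>x + \<alpha>\<rfloor> = \<lfloor>x\<rfloor> + 1"
    unfolding zero_count_def x_def by (simp add: algebra_simps)
  then have "1 \<le> frac x + \<alpha>"
    using alpha_pos alpha_less_1 by (auto simp: floor_add floor_eq_iff split: if_splits)
  moreover have "x + \<alpha> \<notin> \<int>"
    using mult_alpha_notin_Ints[of "Suc (Suc n)"] unfolding x_def by (simp add: algebra_simps)
  then have "frac x + \<alpha> \<noteq> 1"
    unfolding frac_def by (metis Ints_1 Ints_add Ints_of_int add.commute add_diff_cancel_left' diff_add_eq)
  ultimately show ?thesis
    unfolding x_def by linarith
qed

lemma mult_alpha_return:
  "real (Suc (L + nat (zero_count L))) * \<alpha> = real (Suc L) - frac (real (Suc L) * \<alpha>) * \<alpha>"
  using mult_alpha_add_floor[of "Suc L"] unfolding zero_count_def by simp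

lemma zero_count_return:
  "zero_count (L + nat (zero_count L)) = int L"
  "zero_count (Suc (L + nat (zero_count L))) = int L + 1"
proof -
  define f where "f = frac (real (Suc L) * \<alpha>)"
  have f: "0 < f" "f < 1"
    unfolding f_def using frac_mult_alpha_pos frac_lt_1 by auto
  then have "0 < f * \<alpha>" "f * \<alpha> < 1"
    using alpha_pos alpha_less_1 by (auto intro: mult_less_le_imp_less[of f 1 \<alpha> 1, simplified])
  then show "zero_count (L + nat (zero_count L)) = int L"
    using mult_alpha_return[of L] unfolding zero_count_def f_def[symmetric] by (simp add: floor_eq_iff)
  have "0 < \<alpha> * (1 - f)" "\<alpha> * (1 - f) < 1"
    using f alpha_pos alpha_less_1 by (auto intro: mult_less_le_imp_less[of \<alpha> 1 "1 - f" 1, simplified])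
  moreover have "real (Suc (Suc (L + nat (zero_count L)))) * \<alpha> = real (Suc L) + \<alpha> * (1 - f)"
    using mult_alpha_return[of L] unfolding f_def by (simp add: algebra_simps)
  ultimately show "zero_count (Suc (L + nat (zero_count L))) = int L + 1"
    unfolding zero_count_def by (simp add: floor_eq_iff)
qed

lemma sturm_return:
  "sturm (L + nat (zero_count L)) = 0"
  "sturm L = 0 \<Longrightarrow> sturm (Suc (L + nat (zero_count L))) = 1"
proof -
  show "sturm (L + nat (zero_count L)) = 0"
    using zero_count_return unfolding sturm_def by simp
  assume "sturm L = 0"
  define f where "f = frac (real (Suc L) * \<alpha>)"
  have "1 - \<alpha> < f" "f < 1"
    unfolding f_def using sturm_eq_0_imp_frac_gt[OF \<open>sturm L = 0\<close>] frac_lt_1 by auto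
  then have "\<alpha> * (2 - f) < \<alpha> * (1 + \<alpha>)" "0 \<le> \<alpha> * (2 - f)"
    using alpha_pos by auto
  moreover have "real (Suc (Suc (Suc (L + nat (zero_count L))))) * \<alpha> = real (Suc L) + \<alpha> * (2 - f)"
    using mult_alpha_return[of L] unfolding f_def by (simp add: algebra_simps)
  ultimately have "zero_count (Suc (Suc (L + nat (zero_count L)))) = int L + 1"
    unfolding zero_count_def alpha_mult_one_plus by (simp add: floor_eq_iff)
  then show "sturm (Suc (L + nat (zero_count L))) = 1"
    using zero_count_return unfolding sturm_def by simp
qed

lemma fib_morph_sturm_prefix:
  "fib_morph (map sturm [0..<L]) = map sturm [0..<L + nat (zero_count L)]"
proof (induction L)
  case 0
  show ?case
    by (simp add: fib_morph_def zero_count_0)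
next
  case (Suc L)
  define P where "P = L + nat (zero_count L)"
  have "fib_morph (map sturm [0..<Suc L]) = map sturm [0..<P] @ fib_morph [sturm L]"
    using Suc by (simp add: fib_morph_def P_def)
  also have "\<dots> = map sturm [0..<Suc L + nat (zero_count (Suc L))]"
  proof (cases "sturm L = 0")
    case True
    then have "Suc L + nat (zero_count (Suc L)) = Suc (Suc P)"
      using zero_count_Suc[of L] zero_count_0 zero_count_pos[of L] unfolding P_def
      by (cases L) auto
    then show ?thesis
      using True sturm_return[of L] by (simp add: fib_morph_def P_def)
  next
    case False
    then have "Suc L + nat (zero_count (Suc L)) = Suc P"
      using zero_count_Suc[of L] unfolding P_def sturm_def by (auto split: if_splits)
    then show ?thesis
      using False sturm_return[of L] by (simp add: fib_morph_def P_def)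
  qed
  finally show ?case .
qed

lemma fib_morph_power_sturm_prefix: "\<exists>L > n. (fib_morph ^^ n) [0] = map sturm [0..<L]"
proof (induction n)
  case 0
  show ?case
    using sturm_0 by (intro exI[of _ 1]) simp
next
  case (Suc n)
  then obtain L where "n < L" "(fib_morph ^^ n) [0] = map sturm [0..<L]"
    by blast
  moreover have "0 < zero_count L"
    using \<open>n < L\<close> zero_count_pos by simp
  ultimately show ?case
    by (intro exI[of _ "L + nat (zero_count L)"]) (simp add: fib_morph_sturm_prefix)
qed

lemma fib_word_eq_sturm: "fib_word = sturm"
proof
  fix i
  define n where "n = (LEAST n. i < length ((fib_morph ^^ n) [0]))"
  have "\<exists>n. i < length ((fib_morph ^^ n) [0])"
    using fib_morph_power_sturm_prefix[of i] by (metis length_map length_upt minus_nat.diff_0)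
  then have "i < length ((fib_morph ^^ n) [0])"
    unfolding n_def by (rule LeastI_ex)
  moreover obtain L where "(fib_morph ^^ n) [0] = map sturm [0..<L]"
    using fib_morph_power_sturm_prefix by blast
  ultimately show "fib_word i = sturm i"
    unfolding fib_word_def n_def[symmetric] by simp
qed

section \<open>Gaps in the orbit of the rotation by \<alpha>\<close>

lemma rotation_orbit_refine:
  fixes x :: real
  assumes t0: "t0 < fib (Suc (Suc n))"
    and gap: "\<alpha> ^ Suc n < of_int N0 - real t0 * \<alpha> - x" "of_int N0 - real t0 * \<alpha> - x \<le> \<alpha> ^ n"
  shows "\<exists>t < fib (Suc (Suc (Suc n))). \<exists>N::int.
    x < of_int N - real t * \<alpha> \<and> of_int N - real t * \<alpha> \<le> x + \<alpha> ^ Suc n"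
proof -
  define g0 where "g0 = of_int N0 - real t0 * \<alpha> - x"
  have fib_Suc_Suc_Suc: "fib (Suc (Suc (Suc n))) = fib (Suc (Suc n)) + fib (Suc n)"
    by simp
  have witness: "\<exists>t < fib (Suc (Suc (Suc n))). \<exists>N::int.
      x < of_int N - real t * \<alpha> \<and> of_int N - real t * \<alpha> \<le> x + \<alpha> ^ Suc n"
    if "t < fib (Suc (Suc (Suc n)))" "of_int N - real t * \<alpha> - x = g0 - \<delta>"
      "g0 - \<alpha> ^ Suc n \<le> \<delta>" "\<delta> < g0" for t N \<delta>
    using that by (intro exI[of _ t] conjI exI[of _ N]) auto
  have decreasing: "\<alpha> ^ Suc (Suc n) < \<alpha> ^ Suc n"
    using alpha_pos alpha_less_1 by simp
  have g0: "g0 - \<alpha> ^ Suc n \<le> \<alpha> ^ Suc n" "\<alpha> ^ Suc n < g0"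
    using gap alpha_pow_Suc_Suc[of n] decreasing unfolding g0_def by linarith+
  consider "even n" | "odd n" "fib (Suc n) \<le> t0" | "odd n" "t0 < fib (Suc n)"
    by linarith
  then show ?thesis
  proof cases
    case 1
    then have "real (fib (Suc n)) * \<alpha> - real (fib n) = \<alpha> ^ Suc n"
      using fib_mult_alpha_diff[of n] by simp
    then show ?thesis
      using g0 t0 fib_Suc_Suc_Suc
      by (intro witness[of "t0 + fib (Suc n)" "N0 + int (fib n)" "\<alpha> ^ Suc n"])
        (auto simp: g0_def algebra_simps)
  next
    case 2
    then have "real (fib (Suc n)) * \<alpha> - real (fib n) = - (\<alpha> ^ Suc n)"
      using fib_mult_alpha_diff[of n] by simp
    then show ?thesis
      using 2 g0 t0 fib_Suc_Suc_Suc
      by (intro witness[of "t0 - fib (Suc n)" "N0 - int (fib n)" "\<alpha> ^ Suc n"])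
        (auto simp: g0_def algebra_simps of_nat_diff)
  next
    case 3
    then have "real (fib (Suc (Suc n))) * \<alpha> - real (fib (Suc n)) = \<alpha> ^ Suc (Suc n)"
      using fib_mult_alpha_diff[of "Suc n"] by simp
    then show ?thesis
      using 3 gap g0 decreasing fib_Suc_Suc_Suc alpha_pow_Suc_Suc[of n]
      by (intro witness[of "t0 + fib (Suc (Suc n))" "N0 + int (fib (Suc n))" "\<alpha> ^ Suc (Suc n)"])
        (auto simp: g0_def algebra_simps)
  qed
qed

lemma rotation_orbit_gaps:
  fixes x :: real
  shows "\<exists>t < fib (Suc (Suc n)). \<exists>N::int.
    x < of_int N - real t * \<alpha> \<and> of_int N - real t * \<alpha> \<le> x + \<alpha> ^ n"
proof (induction n)
  case 0
  show ?case
    by (intro exI[of _ 0] conjI exI[of _ "\<lfloor>x\<rfloor> + 1"]) auto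
next
  case (Suc n)
  then obtain t0 N0 where t0: "t0 < fib (Suc (Suc n))"
    and gap: "x < of_int N0 - real t0 * \<alpha>" "of_int N0 - real t0 * \<alpha> \<le> x + \<alpha> ^ n"
    by blast
  show ?case
  proof (cases "of_int N0 - real t0 * \<alpha> \<le> x + \<alpha> ^ Suc n")
    case True
    have "fib (Suc (Suc n)) \<le> fib (Suc (Suc (Suc n)))"
      by (simp add: fib_mono)
    then show ?thesis
      using True t0 gap by (intro exI[of _ t0] conjI exI[of _ N0]) auto
  next
    case False
    then show ?thesis
      using rotation_orbit_refine[OF t0, of N0 x] gap by simp
  qed
qed

lemma rotation_orbit_separates:
  fixes lo hi :: real
  assumes "lo + \<alpha> ^ n \<le> hi"
  shows "\<exists>t < fib (Suc (Suc n)). \<lfloor>lo + real t * \<alpha>\<rfloor> \<noteq> \<lfloor>hi + real t * \<alpha>\<rfloor>"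
proof -
  obtain t N where t: "t < fib (Suc (Suc n))"
    and N: "lo < of_int N - real t * \<alpha>" "of_int N - real t * \<alpha> \<le> lo + \<alpha> ^ n"
    using rotation_orbit_gaps by blast
  have "\<lfloor>lo + real t * \<alpha>\<rfloor> < N"
    using N by (simp add: floor_less_iff)
  moreover have "N \<le> \<lfloor>hi + real t * \<alpha>\<rfloor>"
    using N assms by (simp add: le_floor_iff)
  ultimately show ?thesis
    using t by auto
qed

lemma rotation_orbit_separates_shift:
  fixes X \<epsilon> :: real
  assumes "\<alpha> ^ n \<le> \<bar>\<epsilon>\<bar>" "\<bar>\<epsilon>\<bar> \<le> 1 - \<alpha> ^ n"
  shows "\<exists>t < fib (Suc (Suc n)).
    \<lfloor>X + real t * \<alpha>\<rfloor> - \<lfloor>X\<rfloor> \<noteq> \<lfloor>X + \<epsilon> + real t * \<alpha>\<rfloor> - \<lfloor>X + \<epsilon>\<rfloor>"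
proof -
  define x y where "x = frac X" and "y = frac (X + \<epsilon>)"
  have floor_diff_frac: "\<lfloor>Z + r\<rfloor> - \<lfloor>Z\<rfloor> = \<lfloor>frac Z + r\<rfloor>" for Z r :: real
    using floor_add_int[of "frac Z + r" "\<lfloor>Z\<rfloor>"] by (simp add: frac_def)
  define z where "z = \<lfloor>X\<rfloor> - \<lfloor>X + \<epsilon>\<rfloor>"
  have yx: "y - x = \<epsilon> + of_int z"
    unfolding x_def y_def z_def frac_def by simp
  have "\<alpha> ^ n \<le> \<bar>y - x\<bar>"
  proof (cases "z = 0")
    case False
    then have "1 \<le> \<bar>of_int z :: real\<bar>"
      by linarith
    then show ?thesis
      using yx assms(2) by linarith
  qed (use yx assms(1) in simp)
  then have "x + \<alpha> ^ n \<le> y \<or> y + \<alpha> ^ n \<le> x"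
    by linarith
  then obtain t where "t < fib (Suc (Suc n))" "\<lfloor>x + real t * \<alpha>\<rfloor> \<noteq> \<lfloor>y + real t * \<alpha>\<rfloor>"
    using rotation_orbit_separates by metis
  then show ?thesis
    unfolding x_def y_def floor_diff_frac[symmetric] add.assoc by blast
qed

section \<open>Antipowers with blocks of length \<open>2 F\<^bsub>n+1\<^esub>\<close>\<close>

lemma zero_count_increments_eq:
  assumes "\<forall>j<m. sturm (p + j) = sturm (q + j)" and "t \<le> m"
  shows "zero_count (p + t) - zero_count p = zero_count (q + t) - zero_count q"
  using assms(2)
proof (induction t)
  case (Suc t)
  then show ?case
    using assms(1) zero_count_Suc[of "p + t"] zero_count_Suc[of "q + t"] by simp
qed simp

lemma fib_word_factors_differ:
  assumes "fib (Suc (Suc n)) \<le> m"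
    and "\<alpha> ^ n \<le> \<bar>real d * \<alpha> - of_int z\<bar>" "\<bar>real d * \<alpha> - of_int z\<bar> \<le> 1 - \<alpha> ^ n"
  shows "factor fib_word p m \<noteq> factor fib_word (p + d) m"
proof
  assume "factor fib_word p m = factor fib_word (p + d) m"
  then have "\<forall>j<m. sturm (p + j) = sturm (p + d + j)"
    unfolding factor_def fib_word_eq_sturm by (metis add_diff_cancel_left' nth_map_upt)
  then have increments_eq: "zero_count (p + t) - zero_count p = zero_count (p + d + t) - zero_count (p + d)"
    if "t < fib (Suc (Suc n))" for t
    using zero_count_increments_eq that assms(1) by simp
  define \<epsilon> where "\<epsilon> = real d * \<alpha> - of_int z"
  define X where "X = real (Suc p) * \<alpha>"
  have shift_p: "zero_count (p + s) = \<lfloor>X + real s * \<alpha>\<rfloor>" for s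
    unfolding zero_count_def X_def by (simp add: algebra_simps)
  have shift_pd: "zero_count (p + d + s) = \<lfloor>X + \<epsilon> + real s * \<alpha>\<rfloor> + z" for s
  proof -
    have "real (Suc (p + d + s)) * \<alpha> = X + \<epsilon> + real s * \<alpha> + of_int z"
      unfolding X_def \<epsilon>_def by (simp add: algebra_simps)
    then show ?thesis
      unfolding zero_count_def by simp
  qed
  obtain t where "t < fib (Suc (Suc n))"
    and "\<lfloor>X + real t * \<alpha>\<rfloor> - \<lfloor>X\<rfloor> \<noteq> \<lfloor>X + \<epsilon> + real t * \<alpha>\<rfloor> - \<lfloor>X + \<epsilon>\<rfloor>"
    using rotation_orbit_separates_shift assms(2,3) unfolding \<epsilon>_def by blast
  then show False
    using increments_eq[of t] shift_p[of t] shift_p[of 0] shift_pd[of t] shift_pd[of 0] by simp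
qed

lemma fib_word_antipower:
  assumes "2 * (real k - 1) * \<alpha> ^ Suc n + \<alpha> ^ n \<le> 1"
  shows "is_antipower_at fib_word i k (2 * fib (Suc n))"
proof -
  define m where "m = 2 * fib (Suc n)"
  have "fib (Suc (Suc n)) \<le> m"
    unfolding m_def using fib_mono[of n "Suc n"] by simp
  have differ: "factor fib_word (i + a * m) m \<noteq> factor fib_word (i + b * m) m"
    if "a < b" "b < k" for a b
  proof -
    define e where "e = b - a"
    have e: "1 \<le> real e" "real e \<le> real k - 1"
      using that unfolding e_def by auto
    have "real (e * m) * \<alpha> - of_int (int (2 * e * fib n))
        = 2 * real e * (real (fib (Suc n)) * \<alpha> - real (fib n))"
      unfolding m_def by (simp add: algebra_simps)
    then have distance: "\<bar>real (e * m) * \<alpha> - of_int (int (2 * e * fib n))\<bar> = 2 * real e * \<alpha> ^ Suc n"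
      unfolding fib_mult_alpha_diff using alpha_pos by (simp add: abs_mult power_abs)
    have "\<alpha> ^ n \<le> 2 * \<alpha> * \<alpha> ^ n"
      using alpha_gt_half alpha_pos by simp
    also have "\<dots> \<le> 2 * real e * \<alpha> ^ Suc n"
      using e alpha_pos by simp
    finally have "\<alpha> ^ n \<le> 2 * real e * \<alpha> ^ Suc n" .
    moreover have "2 * real e * \<alpha> ^ Suc n \<le> 2 * (real k - 1) * \<alpha> ^ Suc n"
      using e alpha_pos by (intro mult_right_mono) auto
    then have "2 * real e * \<alpha> ^ Suc n \<le> 1 - \<alpha> ^ n"
      using assms by linarith
    moreover have "i + b * m = i + a * m + e * m"
      using that unfolding e_def by (simp add: algebra_simps)
    ultimately show ?thesis
      using fib_word_factors_differ \<open>fib (Suc (Suc n)) \<le> m\<close> distance by metis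
  qed
  show ?thesis
    unfolding is_antipower_at_def m_def[symmetric]
    by (metis differ linorder_neqE_nat)
qed

lemma fib_block_length_bound:
  assumes "\<not> 2 * (real k - 1) * \<alpha> ^ Suc n + \<alpha> ^ n \<le> 1"
  shows "real (fib (Suc (Suc n))) * (2 - \<alpha>) \<le> 2 * real k"
proof -
  have cube: "\<alpha> ^ 3 = 2 * \<alpha> - 1"
    using alpha_pow_Suc_Suc[of 1] alpha_sq by (simp add: power2_eq_square numeral_3_eq_3)
  have "\<alpha> ^ n * \<alpha> ^ 3 = 2 * \<alpha> ^ Suc n - \<alpha> ^ n"
    unfolding cube by (simp add: algebra_simps)
  moreover have "2 * (real k - 1) * \<alpha> ^ Suc n = 2 * real k * \<alpha> ^ Suc n - 2 * \<alpha> ^ Suc n"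
    by (simp add: algebra_simps)
  ultimately have threshold: "1 + \<alpha> ^ n * \<alpha> ^ 3 < 2 * real k * \<alpha> ^ Suc n"
    using assms by linarith
  have "- ((- \<alpha>\<^sup>2) ^ Suc (Suc n)) \<le> \<bar>(- \<alpha>\<^sup>2) ^ Suc (Suc n)\<bar>"
    by simp
  also have "\<dots> = (\<alpha>\<^sup>2) ^ Suc (Suc n)"
    by (simp only: power_abs abs_minus abs_power2 power2_abs)
  also have "\<dots> = \<alpha> ^ (2 * Suc (Suc n))"
    by (simp only: power_mult)
  also have "\<dots> \<le> \<alpha> ^ (n + 3)"
    using alpha_pos alpha_less_1 by (intro power_decreasing) auto
  finally have "real (fib (Suc (Suc n))) * (2 - \<alpha>) * \<alpha> ^ Suc n \<le> 1 + \<alpha> ^ n * \<alpha> ^ 3"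
    using fib_Suc_mult_alpha_pow[of "Suc n"] by (simp add: power_add algebra_simps)
  then have "real (fib (Suc (Suc n))) * (2 - \<alpha>) * \<alpha> ^ Suc n \<le> 2 * real k * \<alpha> ^ Suc n"
    using threshold by linarith
  then show ?thesis
    using alpha_pos by simp
qed

lemma antipower_index_exists:
  assumes "0 < k"
  shows "\<exists>n. 2 * (real k - 1) * \<alpha> ^ Suc n + \<alpha> ^ n \<le> 1 \<and>
    real (2 * fib (Suc n)) \<le> 4 / (2 - \<alpha>) * real k"
proof -
  define C where "C n \<longleftrightarrow> 2 * (real k - 1) * \<alpha> ^ Suc n + \<alpha> ^ n \<le> 1" for n
  obtain n0 where n0: "\<alpha> ^ n0 < 1 / (2 * real k)"
    using real_arch_pow_inv[of "1 / (2 * real k)" \<alpha>] assms alpha_pos alpha_less_1 by auto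
  have "2 * (real k - 1) * \<alpha> ^ Suc n0 \<le> 2 * (real k - 1) * \<alpha> ^ n0"
    using assms alpha_pos alpha_less_1 by (intro mult_left_mono power_decreasing) auto
  moreover have "2 * real k * \<alpha> ^ n0 < 1"
    using n0 assms by (simp add: field_simps)
  moreover have "0 < \<alpha> ^ n0"
    using alpha_pos by simp
  ultimately have "C n0"
    unfolding C_def by (simp add: algebra_simps)
  define n where "n = (LEAST n. C n)"
  have "C n"
    unfolding n_def using \<open>C n0\<close> by (rule LeastI)
  moreover have "real (2 * fib (Suc n)) * (2 - \<alpha>) \<le> 4 * real k"
  proof (cases n)
    case 0
    then show ?thesis
      using assms alpha_pos by simp
  next
    case (Suc n')
    then have "\<not> C n'"
      unfolding n_def by (metis lessI not_less_Least)
    then have "real (fib (Suc n)) * (2 - \<alpha>) \<le> 2 * real k"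
      using fib_block_length_bound[of k n'] Suc unfolding C_def by simp
    then show ?thesis
      by simp
  qed
  then have "real (2 * fib (Suc n)) \<le> 4 / (2 - \<alpha>) * real k"
    using alpha_less_1 by (simp add: field_simps)
  ultimately show ?thesis
    unfolding C_def by blast
qed

lemma antipower_constant_eq: "4 / sqrt 5 * ((1 + sqrt 5) / 2) = 4 / (2 - \<alpha>)"
proof -
  have "(2 - \<alpha>) * ((1 + sqrt 5) / 2) = sqrt 5"
    unfolding \<alpha>_def by (simp add: algebra_simps)
  moreover have "2 - \<alpha> \<noteq> 0"
    using alpha_less_1 by simp
  ultimately show ?thesis
    by (simp add: field_simps)
qed

theorem theorem6:
  "\<exists>c::real. c \<le> 4 / sqrt 5 * ((1 + sqrt 5) / 2) \<and>
     (\<forall>k::nat. k > 0 \<longrightarrow> (\<forall>i::nat. \<exists>m::nat. m > 0 \<and> real m \<le> c * real k \<and>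
        is_antipower_at fib_word i k m))"
proof (intro exI[of _ "4 / sqrt 5 * ((1 + sqrt 5) / 2)"] conjI order_refl allI impI)
  fix k i :: nat
  assume "0 < k"
  then obtain n where "2 * (real k - 1) * \<alpha> ^ Suc n + \<alpha> ^ n \<le> 1"
    and "real (2 * fib (Suc n)) \<le> 4 / (2 - \<alpha>) * real k"
    using antipower_index_exists by blast
  moreover have "0 < 2 * fib (Suc n)"
    by (simp add: fib_neq_0_nat)
  ultimately show "\<exists>m>0. real m \<le> 4 / sqrt 5 * ((1 + sqrt 5) / 2) * real k \<and> is_antipower_at fib_word i k m"
    unfolding antipower_constant_eq using fib_word_antipower by blast
qed

end
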